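(* Let $u$ and $v$ be vertices of $G$ and let $\delta_T(u,v)$ denote the length of the path from $u$ to $v$ in $T$. The routing algorithm, when routing from $u$ to $v$, terminates after a finite number of steps, and the total weight (in $G$) of the path it traverses is exactly $\delta_T(u,v)$; in particular the routing ratio with respect to the tree metric induced by $T$ is $1$.
   Context: Let $T$ be a rooted tree on $n$ vertices with positive edge weights; $P(a,b)$ is the path in $T$ from $a$ to $b$ and $\delta_T(a,b)$ its weight. Ancestor/descendant refer to $T$, and a vertex counts as its own ancestor and descendant; "deepest"/"highest" refer to depth in $T$. $T_v$ is the subtree of $T$ rooted at $v$. For every non-leaf vertex $v$ fix a child $c_1(v)$ with $|T_{c_1(v)}|$ maximal; edges $(v,c_1(v))$ are leftmost. A subtree $R$ of $T$ is rooted at its vertex closest to the root, $rt(R)$, and inherits the leftmost labelling; $R_v$ is the subtree of $R$ rooted at $v$. $P_R(v)$ is the longest downward path from $v$ in $R$ using only leftmost edges, with last vertex $l(v)$; $l(R):=l(rt(R))$. A vertex $v$ of $R$ is $d$-balanced if $|R_{c_1(v)}|\le |R|-d$ (with $|R_{c_1(v)}|=0$ if $c_1(v)$ is undefined or not in $R$); $b_d(v)$ is the first $d$-balanced vertex on $P_R(v)$, or NULL. $CV(R,d)=\emptyset$ if $b_d(rt(R))$ is NULL, else $\{b\}\cup\bigcup_w CV(R_w,d)$ with $b=b_d(rt(R))$ and $w$ ranging over children of $b$ in $R$. Fix an integer $k\ge4$; for a subtree $R$ with $m$ vertices, $C_R=V(R)$ if $k\ge m/2-1$, else $C_R=CV(R,m/k)\cup\{l(R),rt(R)\}$.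 Canonical subtrees: $T$ is canonical; if $R$ is canonical, each component of $R$ minus $C_R$ is canonical. Each vertex $v$ lies in $C_R$ for exactly one canonical $R$, denoted $T^v$. The spanner $G$ has vertex set $V(T)$ and edges: all edges of $T$, and all pairs of distinct vertices of $C_R$ for every canonical $R$; edge $(a,b)$ has weight $\delta_T(a,b)$. Routing algorithm from current vertex $u$ to destination $v$, repeated until $v$ is reached: Case 0: if $v$ is adjacent to $u$, move to $v$. Case 1: $u$ is an ancestor of $v$; let $X$ be the vertices of $C_{T^u}$ that are ancestors of $v$, $x$ the deepest; move to $x$, then to the child of $x$ that is an ancestor of $v$. Case 2: $u$ is a descendant of $v$; let $X$ be the vertices of $C_{T^u}$ that are descendants of $v$ and ancestors of $u$, $x$ the highest; move to $x$, then to the parent of $x$. Case 3: $u$ is neither; let $X$ be the vertices of $C_{T^u}$ that are ancestors of $v$ but not of $u$, and $Y$ those that are ancestors of $u$ but not of $v$, $y$ the highest vertex of $Y$. Case 3 a): $X=\emptyset$: move to $y$, then to the parent of $y$. Case 3 b): $X\neq\emptyset$: with $x$ the deepest vertex of $X$ and $x'$ the child of $x$ that is an ancestor of $v$, move to $x$, then to $x'$. (Moving to the current vertex means staying.) *)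

theory Defs
  imports Complex_Main
begin

text \<open>The edges of T are the pairs (x, par x) for x in V - {r}; the weight of that
edge is w x.\<close>

definition anc :: "('a \<Rightarrow> 'a) \<Rightarrow> 'a \<Rightarrow> 'a \<Rightarrow> bool" where
  "anc par a b \<longleftrightarrow> (\<exists>k. (par ^^ k) b = a)"

definition rooted_tree :: "'a set \<Rightarrow> 'a \<Rightarrow> ('a \<Rightarrow> 'a) \<Rightarrow> bool" where
  "rooted_tree V r par \<longleftrightarrow> finite V \<and> r \<in> V \<and> par r = r \<and>
     (\<forall>v\<in>V. par v \<in> V \<and> anc par r v)"

definition depth :: "'a \<Rightarrow> ('a \<Rightarrow> 'a) \<Rightarrow> 'a \<Rightarrow> nat" where
  "depth r par v = (LEAST k. (par ^^ k) v = r)"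

definition isChild :: "'a set \<Rightarrow> 'a \<Rightarrow> ('a \<Rightarrow> 'a) \<Rightarrow> 'a \<Rightarrow> 'a \<Rightarrow> bool" where
  "isChild V r par c x \<longleftrightarrow> c \<in> V \<and> c \<noteq> r \<and> par c = x"

text \<open>Weight of the tree path P(a,b): the edges (x, par x) of P(a,b) are exactly
those whose lower endpoint x is an ancestor of exactly one of a, b.\<close>
definition delta :: "('a \<Rightarrow> 'a) \<Rightarrow> ('a \<Rightarrow> real) \<Rightarrow> 'a \<Rightarrow> 'a \<Rightarrow> real" where
  "delta par w a b =
     (\<Sum>x \<in> ({x. anc par x a} - {x. anc par x b}) \<union> ({x. anc par x b} - {x. anc par x a}). w x)"

definition tadj :: "'a set \<Rightarrow> 'a \<Rightarrow> ('a \<Rightarrow> 'a) \<Rightarrow> 'a \<Rightarrow> 'a \<Rightarrow> bool" where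
  "tadj V r par x y \<longleftrightarrow> x \<in> V \<and> y \<in> V \<and>
     ((x \<noteq> r \<and> par x = y) \<or> (y \<noteq> r \<and> par y = x))"

definition conn_in :: "'a set \<Rightarrow> 'a \<Rightarrow> ('a \<Rightarrow> 'a) \<Rightarrow> 'a set \<Rightarrow> 'a \<Rightarrow> 'a \<Rightarrow> bool" where
  "conn_in V r par A x y \<longleftrightarrow>
     x \<in> A \<and> y \<in> A \<and> (\<lambda>a b. a \<in> A \<and> b \<in> A \<and> tadj V r par a b)\<^sup>*\<^sup>* x y"

definition components :: "'a set \<Rightarrow> 'a \<Rightarrow> ('a \<Rightarrow> 'a) \<Rightarrow> 'a set \<Rightarrow> 'a set set" where
  "components V r par A = {{y. conn_in V r par A x y} | x. x \<in> A}"

definition rt :: "'a \<Rightarrow> ('a \<Rightarrow> 'a) \<Rightarrow> 'a set \<Rightarrow> 'a" where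
  "rt r par S = (THE x. x \<in> S \<and> (\<forall>y\<in>S. y \<noteq> x \<longrightarrow> depth r par x < depth r par y))"

definition sub :: "('a \<Rightarrow> 'a) \<Rightarrow> 'a set \<Rightarrow> 'a \<Rightarrow> 'a set" where
  "sub par S v = {x \<in> S. anc par v x}"

text \<open>c1 is the fixed heavy-child choice; (v, c1 v) is a leftmost edge when
c1 v is a child of v. One step along a leftmost edge inside R (stays at the end).\<close>
definition lstep :: "'a set \<Rightarrow> 'a \<Rightarrow> ('a \<Rightarrow> 'a) \<Rightarrow> ('a \<Rightarrow> 'a) \<Rightarrow> 'a set \<Rightarrow> 'a \<Rightarrow> 'a" where
  "lstep V r par c1 S x = (if isChild V r par (c1 x) x \<and> c1 x \<in> S then c1 x else x)"

definition lend :: "'a set \<Rightarrow> 'a \<Rightarrow> ('a \<Rightarrow> 'a) \<Rightarrow> ('a \<Rightarrow> 'a) \<Rightarrow> 'a set \<Rightarrow> 'a \<Rightarrow> 'a" where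
  "lend V r par c1 S v = (THE y. (\<exists>j. (lstep V r par c1 S ^^ j) v = y) \<and> lstep V r par c1 S y = y)"

definition hsize :: "'a set \<Rightarrow> 'a \<Rightarrow> ('a \<Rightarrow> 'a) \<Rightarrow> ('a \<Rightarrow> 'a) \<Rightarrow> 'a set \<Rightarrow> 'a \<Rightarrow> nat" where
  "hsize V r par c1 S v =
     (if isChild V r par (c1 v) v \<and> c1 v \<in> S then card (sub par S (c1 v)) else 0)"

definition balanced :: "'a set \<Rightarrow> 'a \<Rightarrow> ('a \<Rightarrow> 'a) \<Rightarrow> ('a \<Rightarrow> 'a) \<Rightarrow> 'a set \<Rightarrow> real \<Rightarrow> 'a \<Rightarrow> bool" where
  "balanced V r par c1 S d v \<longleftrightarrow> real (hsize V r par c1 S v) \<le> real (card S) - d"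

definition bd :: "'a set \<Rightarrow> 'a \<Rightarrow> ('a \<Rightarrow> 'a) \<Rightarrow> ('a \<Rightarrow> 'a) \<Rightarrow> 'a set \<Rightarrow> real \<Rightarrow> 'a \<Rightarrow> 'a option" where
  "bd V r par c1 S d v =
     (if \<exists>j. balanced V r par c1 S d ((lstep V r par c1 S ^^ j) v)
      then Some ((lstep V r par c1 S ^^ (LEAST j. balanced V r par c1 S d ((lstep V r par c1 S ^^ j) v))) v)
      else None)"

inductive CV :: "'a set \<Rightarrow> 'a \<Rightarrow> ('a \<Rightarrow> 'a) \<Rightarrow> ('a \<Rightarrow> 'a) \<Rightarrow> real \<Rightarrow> 'a set \<Rightarrow> 'a \<Rightarrow> bool"
  for V r par c1 d where
  CV_here: "bd V r par c1 S d (rt r par S) = Some b \<Longrightarrow> CV V r par c1 d S b"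
| CV_rec: "bd V r par c1 S d (rt r par S) = Some b \<Longrightarrow> isChild V r par w b \<Longrightarrow> w \<in> S \<Longrightarrow>
     CV V r par c1 d (sub par S w) x \<Longrightarrow> CV V r par c1 d S x"

definition Cset :: "'a set \<Rightarrow> 'a \<Rightarrow> ('a \<Rightarrow> 'a) \<Rightarrow> ('a \<Rightarrow> 'a) \<Rightarrow> nat \<Rightarrow> 'a set \<Rightarrow> 'a set" where
  "Cset V r par c1 k S =
     (if real k \<ge> real (card S) / 2 - 1 then S
      else {x. CV V r par c1 (real (card S) / real k) S x}
           \<union> {lend V r par c1 S (rt r par S), rt r par S})"

inductive canonical :: "'a set \<Rightarrow> 'a \<Rightarrow> ('a \<Rightarrow> 'a) \<Rightarrow> ('a \<Rightarrow> 'a) \<Rightarrow> nat \<Rightarrow> 'a set \<Rightarrow> bool"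
  for V r par c1 k where
  canon_T: "canonical V r par c1 k V"
| canon_comp: "canonical V r par c1 k S \<Longrightarrow>
     X \<in> components V r par (S - Cset V r par c1 k S) \<Longrightarrow> canonical V r par c1 k X"

definition Tsup :: "'a set \<Rightarrow> 'a \<Rightarrow> ('a \<Rightarrow> 'a) \<Rightarrow> ('a \<Rightarrow> 'a) \<Rightarrow> nat \<Rightarrow> 'a \<Rightarrow> 'a set" where
  "Tsup V r par c1 k v = (THE S. canonical V r par c1 k S \<and> v \<in> Cset V r par c1 k S)"

definition adjG :: "'a set \<Rightarrow> 'a \<Rightarrow> ('a \<Rightarrow> 'a) \<Rightarrow> ('a \<Rightarrow> 'a) \<Rightarrow> nat \<Rightarrow> 'a \<Rightarrow> 'a \<Rightarrow> bool" where
  "adjG V r par c1 k a b \<longleftrightarrow> a \<in> V \<and> b \<in> V \<and> a \<noteq> b \<and>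
     (tadj V r par a b \<or>
      (\<exists>S. canonical V r par c1 k S \<and> a \<in> Cset V r par c1 k S \<and> b \<in> Cset V r par c1 k S))"

definition deepest :: "'a \<Rightarrow> ('a \<Rightarrow> 'a) \<Rightarrow> 'a set \<Rightarrow> 'a" where
  "deepest r par X = (THE x. x \<in> X \<and> (\<forall>y\<in>X. depth r par y \<le> depth r par x))"

definition highest :: "'a \<Rightarrow> ('a \<Rightarrow> 'a) \<Rightarrow> 'a set \<Rightarrow> 'a" where
  "highest r par X = (THE x. x \<in> X \<and> (\<forall>y\<in>X. depth r par x \<le> depth r par y))"

definition childToward :: "'a set \<Rightarrow> 'a \<Rightarrow> ('a \<Rightarrow> 'a) \<Rightarrow> 'a \<Rightarrow> 'a \<Rightarrow> 'a" where
  "childToward V r par x v = (THE c. isChild V r par c x \<and> anc par c v)"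

text \<open>One iteration of the routing algorithm at current vertex u (u \<noteq> v):
the list of vertices moved to, in order; its last element is the new current vertex.\<close>
definition rstep :: "'a set \<Rightarrow> 'a \<Rightarrow> ('a \<Rightarrow> 'a) \<Rightarrow> ('a \<Rightarrow> 'a) \<Rightarrow> nat \<Rightarrow> 'a \<Rightarrow> 'a \<Rightarrow> 'a list" where
  "rstep V r par c1 k u v =
    (let C = Cset V r par c1 k (Tsup V r par c1 k u) in
     if adjG V r par c1 k u v then [v]
     else if anc par u v then
       (let x = deepest r par {x \<in> C. anc par x v} in [x, childToward V r par x v])
     else if anc par v u then
       (let x = highest r par {x \<in> C. anc par v x \<and> anc par x u} in [x, par x])
     else
       (let X = {x \<in> C. anc par x v \<and> \<not> anc par x u};
            Y = {y \<in> C. anc par y u \<and> \<not> anc par y v} in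
        if X = {} then (let y = highest r par Y in [y, par y])
        else (let x = deepest r par X in [x, childToward V r par x v])))"

fun walk :: "'a set \<Rightarrow> 'a \<Rightarrow> ('a \<Rightarrow> 'a) \<Rightarrow> ('a \<Rightarrow> 'a) \<Rightarrow> nat \<Rightarrow> nat \<Rightarrow> 'a \<Rightarrow> 'a \<Rightarrow> 'a list" where
  "walk V r par c1 k 0 u v = [u]"
| "walk V r par c1 k (Suc n) u v =
     (if u = v then [u]
      else u # butlast (rstep V r par c1 k u v) @ walk V r par c1 k n (last (rstep V r par c1 k u v)) v)"

text \<open>weight in G of a walk (edge (a,b) of G has weight delta a b; staying costs 0)\<close>
definition walk_weight :: "('a \<Rightarrow> 'a) \<Rightarrow> ('a \<Rightarrow> real) \<Rightarrow> 'a list \<Rightarrow> real" where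
  "walk_weight par w xs = sum_list (map (\<lambda>(a, b). delta par w a b) (zip xs (tl xs)))"

end

(* Each iteration of the routing algorithm from u to v (unless it reaches v directly) moves
   to a vertex x of the clique C of T^u and then along a tree edge to a vertex y, where x and y
   lie in this order on the tree path P(u,v) and y is not u.  As an edge (a,b) of G has weight
   delta_T(a,b), such an iteration costs delta_T(u,x) + delta_T(x,y) = delta_T(u,y), while P(y,v)
   has fewer edges than P(u,v); induction on the number of edges of P(u,v) gives termination and
   total weight delta_T(u,v).  That T^u is well defined rests on the laminarity of the canonical
   subtrees: two of them are disjoint, equal, or one lies in the other outside its set C. *)

theory Submission
  imports Defs
begin

lemma funpow_fixpoint_stable: "f z = z \<Longrightarrow> (f ^^ n) z = z"
  by (induction n) auto

lemma funpow_split: "m \<le> n \<Longrightarrow> (f ^^ n) x = (f ^^ (n - m)) ((f ^^ m) x)"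
  by (metis funpow_add le_add_diff_inverse2 o_apply)

lemma funpow_orbit_fixpoint_unique:
  assumes "f ((f ^^ i) x) = (f ^^ i) x" "f ((f ^^ j) x) = (f ^^ j) x"
  shows "(f ^^ i) x = (f ^^ j) x"
proof -
  have "(f ^^ (m + n)) x = (f ^^ n) x" if "f ((f ^^ n) x) = (f ^^ n) x" for m n
    using funpow_fixpoint_stable[of f "(f ^^ n) x" m, OF that] by (simp add: funpow_add)
  then show ?thesis
    using assms by (metis le_add_diff_inverse2 nat_le_linear)
qed

lemma funpow_closed: "(\<And>z. z \<in> S \<Longrightarrow> f z \<in> S) \<Longrightarrow> x \<in> S \<Longrightarrow> (f ^^ n) x \<in> S"
  by (induction n) auto

lemma funpow_reaches_fixpoint:
  fixes g :: "'a \<Rightarrow> nat"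
  assumes "finite S" "x \<in> S" "\<And>z. z \<in> S \<Longrightarrow> f z \<in> S"
    and "\<And>z. z \<in> S \<Longrightarrow> f z \<noteq> z \<Longrightarrow> g z < g (f z)"
  shows "\<exists>j. f ((f ^^ j) x) = (f ^^ j) x"
proof (rule ccontr)
  assume moving: "\<nexists>j. f ((f ^^ j) x) = (f ^^ j) x"
  have orbit_in: "(f ^^ j) x \<in> S" for j
    using funpow_closed assms(2,3) by metis
  have "j \<le> g ((f ^^ j) x)" for j
  proof (induction j)
    case (Suc j)
    then show ?case using assms(4)[OF orbit_in] moving by (simp, metis Suc_le_eq le_less_trans)
  qed simp
  moreover have "g ((f ^^ Suc (Max (g ` S))) x) \<le> Max (g ` S)"
    using Max_ge[OF finite_imageI[OF assms(1)] imageI[OF orbit_in]] .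
  ultimately show False
    by (metis Suc_n_not_le_n le_trans)
qed

lemma ex1_max_inj_on:
  fixes g :: "'a \<Rightarrow> 'b::linorder"
  assumes "finite X" "X \<noteq> {}" "inj_on g X"
  shows "\<exists>!x. x \<in> X \<and> (\<forall>y\<in>X. g y \<le> g x)"
proof -
  have "Max (g ` X) \<in> g ` X" using assms(1,2) by simp
  then obtain x where x: "x \<in> X" "g x = Max (g ` X)" by (metis imageE)
  show ?thesis
  proof (rule ex1I)
    fix x' assume x': "x' \<in> X \<and> (\<forall>y\<in>X. g y \<le> g x')"
    then have "g x' \<le> g x" unfolding x(2) using assms(1) by simp
    moreover have "g x \<le> g x'" using x(1) x' by blast
    ultimately have "g x' = g x" by (rule antisym)
    then show "x' = x" using inj_onD[OF assms(3)] x(1) x' by blast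
  qed (unfold x(2), use x(1) assms(1) in auto)
qed

lemma ex1_min_inj_on:
  fixes g :: "'a \<Rightarrow> 'b::linorder"
  assumes "finite X" "X \<noteq> {}" "inj_on g X"
  shows "\<exists>!x. x \<in> X \<and> (\<forall>y\<in>X. g x \<le> g y)"
proof -
  have "Min (g ` X) \<in> g ` X" using assms(1,2) by simp
  then obtain x where x: "x \<in> X" "g x = Min (g ` X)" by (metis imageE)
  show ?thesis
  proof (rule ex1I)
    fix x' assume x': "x' \<in> X \<and> (\<forall>y\<in>X. g x' \<le> g y)"
    then have "g x' \<le> g x" using x(1) by blast
    moreover have "g x \<le> g x'" unfolding x(2) using x' assms(1) by simp
    ultimately have "g x' = g x" by (rule antisym)
    then show "x' = x" using inj_onD[OF assms(3)] x(1) x' by blast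
  qed (unfold x(2), use x(1) assms(1) in auto)
qed

section \<open>Ancestry and depth\<close>

locale rtree =
  fixes V :: "'a set" and r :: 'a and par :: "'a \<Rightarrow> 'a"
  assumes rooted_tree: "rooted_tree V r par"
begin

lemma finite_V: "finite V" and root_in_V: "r \<in> V" and par_root: "par r = r"
  and par_in_V: "x \<in> V \<Longrightarrow> par x \<in> V" and anc_root: "x \<in> V \<Longrightarrow> anc par r x"
  using rooted_tree unfolding rooted_tree_def by auto

lemma anc_refl [simp]: "anc par a a"
  unfolding anc_def by (rule exI[of _ 0]) simp

lemma anc_trans:
  assumes "anc par a b" "anc par b c" shows "anc par a c"
proof -
  obtain i j where "(par ^^ i) b = a" "(par ^^ j) c = b"
    using assms unfolding anc_def by blast
  then have "(par ^^ (i + j)) c = a" by (simp add: funpow_add)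
  then show ?thesis unfolding anc_def by blast
qed

lemma anc_par: "anc par (par x) x"
  unfolding anc_def by (rule exI[of _ 1]) simp

lemma anc_in_V: "anc par a b \<Longrightarrow> b \<in> V \<Longrightarrow> a \<in> V"
proof -
  have "(par ^^ k) b \<in> V" if "b \<in> V" for k
    by (induction k) (use that par_in_V in auto)
  then show "anc par a b \<Longrightarrow> b \<in> V \<Longrightarrow> a \<in> V"
    unfolding anc_def by blast
qed

lemma par_fixed_iff: "x \<in> V \<Longrightarrow> par x = x \<longleftrightarrow> x = r"
proof
  assume "x \<in> V" "par x = x"
  then show "x = r"
    using anc_root funpow_fixpoint_stable[of par x] unfolding anc_def by metis
qed (simp add: par_root)

lemma anc_par_iff: "anc par a x \<longleftrightarrow> a = x \<or> anc par a (par x)"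
proof
  assume "anc par a x"
  then obtain k where k: "(par ^^ k) x = a" unfolding anc_def by blast
  show "a = x \<or> anc par a (par x)"
  proof (cases k)
    case (Suc j)
    then have "(par ^^ j) (par x) = a" using k by (simp add: funpow_swap1)
    then show ?thesis unfolding anc_def by blast
  qed (use k in simp)
next
  show "a = x \<or> anc par a (par x) \<Longrightarrow> anc par a x"
    using anc_trans[OF _ anc_par] by auto
qed

lemma anc_linear:
  assumes "anc par a z" "anc par b z" shows "anc par a b \<or> anc par b a"
proof -
  obtain i j where i: "(par ^^ i) z = a" and j: "(par ^^ j) z = b"
    using assms unfolding anc_def by blast
  show ?thesis
  proof (cases "i \<le> j")
    case True
    then have "(par ^^ (j - i)) a = b" using i j funpow_split[of i j par z] by simp
    then show ?thesis unfolding anc_def by blast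
  next
    case False
    then have "(par ^^ (i - j)) b = a" using i j funpow_split[of j i par z] by simp
    then show ?thesis unfolding anc_def by blast
  qed
qed

lemma depth_less:
  assumes "anc par t y" "y \<in> V" "t \<noteq> y"
  shows "depth r par t < depth r par y"
proof -
  obtain k where k: "(par ^^ k) y = t" using assms(1) unfolding anc_def by blast
  obtain m where m: "(par ^^ m) y = r" using anc_root[OF assms(2)] unfolding anc_def by blast
  define d where "d = depth r par y"
  have d: "(par ^^ d) y = r" unfolding d_def depth_def using m by (rule LeastI)
  have "k > 0" using k assms(3) by (cases k) auto
  show ?thesis
  proof (cases "k \<le> d")
    case True
    then have "(par ^^ (d - k)) t = r"
      using d k funpow_split[of k d par y] by simp
    then have "depth r par t \<le> d - k"
      unfolding depth_def by (rule Least_le)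
    then show ?thesis using \<open>k > 0\<close> True unfolding d_def by linarith
  next
    case False
    then have "t = r"
      using d k funpow_fixpoint_stable[of par r "k - d"] par_root funpow_split[of d k par y]
      by simp
    moreover have "d \<noteq> 0"
    proof
      assume "d = 0"
      then show False using d \<open>t = r\<close> assms(3) by simp
    qed
    moreover have "depth r par r = 0" unfolding depth_def by simp
    ultimately show ?thesis unfolding d_def by simp
  qed
qed

lemma anc_antisym:
  assumes "anc par a b" "anc par b a" "b \<in> V"
  shows "a = b"
proof (rule ccontr)
  assume "a \<noteq> b"
  then have "depth r par a < depth r par b" "depth r par b < depth r par a"
    using depth_less assms anc_in_V by auto
  then show False by simp
qed

lemma not_anc_par:
  assumes "x \<in> V" "x \<noteq> r" shows "\<not> anc par x (par x)"
proof
  assume "anc par x (par x)"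
  then have "par x = x" using anc_antisym[OF anc_par] par_in_V assms(1) by blast
  then show False using par_fixed_iff assms by blast
qed

lemma depth_inj_on_ancestors:
  assumes "z \<in> V" shows "inj_on (depth r par) {x. anc par x z}"
proof (rule inj_onI)
  fix a b assume "a \<in> {x. anc par x z}" "b \<in> {x. anc par x z}"
    and same_depth: "depth r par a = depth r par b"
  then have ab: "anc par a z" "anc par b z" by simp_all
  then have "a \<in> V" "b \<in> V" using assms anc_in_V by blast+
  then show "a = b"
    using anc_linear[OF ab] depth_less[of a b] depth_less[of b a] same_depth by auto
qed

lemma tadj_neq: "tadj V r par a b \<Longrightarrow> a \<noteq> b"
  unfolding tadj_def using par_fixed_iff by auto

end

section \<open>Tree paths\<close>

definition path_edges :: "('a \<Rightarrow> 'a) \<Rightarrow> 'a \<Rightarrow> 'a \<Rightarrow> 'a set" where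
  "path_edges par a b =
     ({x. anc par x a} - {x. anc par x b}) \<union> ({x. anc par x b} - {x. anc par x a})"

text \<open>m lies on the tree path P(a,b).\<close>
definition on_path :: "('a \<Rightarrow> 'a) \<Rightarrow> 'a \<Rightarrow> 'a \<Rightarrow> 'a \<Rightarrow> bool" where
  "on_path par a m b \<longleftrightarrow>
     {x. anc par x a} \<inter> {x. anc par x b} \<subseteq> {x. anc par x m} \<and>
     {x. anc par x m} \<subseteq> {x. anc par x a} \<union> {x. anc par x b}"

definition path_move :: "'a set \<Rightarrow> 'a \<Rightarrow> ('a \<Rightarrow> 'a) \<Rightarrow> 'a \<Rightarrow> 'a \<Rightarrow> 'a \<Rightarrow> 'a \<Rightarrow> bool" where
  "path_move V r par u v x y \<longleftrightarrow>
     tadj V r par x y \<and> on_path par u x y \<and> on_path par u y v \<and> y \<noteq> u"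

lemma delta_eq_sum_path_edges: "delta par w a b = sum w (path_edges par a b)"
  unfolding delta_def path_edges_def ..

lemma path_edges_split:
  assumes "on_path par a m b"
  shows "path_edges par a b = path_edges par a m \<union> path_edges par m b"
    and "path_edges par a m \<inter> path_edges par m b = {}"
  using assms unfolding on_path_def path_edges_def by blast+

context rtree
begin

lemma on_pathI:
  assumes "anc par m a \<or> anc par m b" "\<And>c. anc par c a \<Longrightarrow> anc par c b \<Longrightarrow> anc par c m"
  shows "on_path par a m b"
  unfolding on_path_def using assms anc_trans[of _ m] by blast

lemma finite_path_edges: "a \<in> V \<Longrightarrow> b \<in> V \<Longrightarrow> finite (path_edges par a b)"
  unfolding path_edges_def
  by (rule finite_subset[OF _ finite_V]) (use anc_in_V in blast)

lemma delta_on_path: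
  assumes "on_path par a m b" "a \<in> V" "m \<in> V" "b \<in> V"
  shows "delta par w a b = delta par w a m + delta par w m b"
  unfolding delta_eq_sum_path_edges path_edges_split(1)[OF assms(1)]
  using sum.union_disjoint[OF finite_path_edges finite_path_edges path_edges_split(2)[OF assms(1)]]
    assms(2-4) by blast

lemma path_edges_nonempty:
  assumes "a \<in> V" "b \<in> V" "a \<noteq> b" shows "path_edges par a b \<noteq> {}"
proof
  assume "path_edges par a b = {}"
  then have "anc par a b" "anc par b a"
    unfolding path_edges_def using anc_refl by blast+
  then show False using anc_antisym assms by blast
qed

lemma card_path_edges_less:
  assumes "on_path par a m b" "a \<in> V" "m \<in> V" "b \<in> V" "a \<noteq> m"
  shows "card (path_edges par m b) < card (path_edges par a b)"
proof -
  have "card (path_edges par a b) = card (path_edges par a m) + card (path_edges par m b)"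
    unfolding path_edges_split(1)[OF assms(1)]
    using card_Un_disjoint[OF finite_path_edges finite_path_edges path_edges_split(2)[OF assms(1)]]
      assms(2-4) by blast
  moreover have "card (path_edges par a m) > 0"
    using path_edges_nonempty finite_path_edges assms(2,3,5) by (simp add: card_gt_0_iff)
  ultimately show ?thesis by linarith
qed

lemma deepest_mem:
  assumes "finite X" "X \<noteq> {}" "X \<subseteq> {x. anc par x z}" "z \<in> V"
  shows "deepest r par X \<in> X" "\<forall>y\<in>X. depth r par y \<le> depth r par (deepest r par X)"
  using theI'[OF ex1_max_inj_on[OF assms(1,2) inj_on_subset[OF depth_inj_on_ancestors assms(3)]]]
    assms(4) unfolding deepest_def by blast+

lemma highest_mem:
  assumes "finite X" "X \<noteq> {}" "X \<subseteq> {x. anc par x z}" "z \<in> V"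
  shows "highest r par X \<in> X"
  using theI'[OF ex1_min_inj_on[OF assms(1,2) inj_on_subset[OF depth_inj_on_ancestors assms(3)]]]
    assms(4) unfolding highest_def by blast

lemma ex_child_toward:
  "(par ^^ k) v = x \<Longrightarrow> x \<noteq> v \<Longrightarrow> v \<in> V \<Longrightarrow> \<exists>c. isChild V r par c x \<and> anc par c v"
proof (induction k arbitrary: v)
  case (Suc k)
  show ?case
  proof (cases "par v = x")
    case True
    then have "v \<noteq> r" using Suc.prems(2) par_root by auto
    then show ?thesis unfolding isChild_def using True Suc.prems(3) by auto
  next
    case False
    have "(par ^^ k) (par v) = x" using Suc.prems(1) by (simp add: funpow_swap1)
    moreover have "x \<noteq> par v" using False by simp
    ultimately obtain c where "isChild V r par c x" "anc par c (par v)"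
      using Suc.IH par_in_V[OF Suc.prems(3)] by blast
    then show ?thesis using anc_trans[OF _ anc_par] by blast
  qed
qed simp

lemma child_toward:
  assumes "anc par x v" "x \<noteq> v" "v \<in> V"
  shows "isChild V r par (childToward V r par x v) x" "anc par (childToward V r par x v) v"
proof -
  have "\<exists>!c. isChild V r par c x \<and> anc par c v"
  proof (rule ex_ex1I)
    obtain k where "(par ^^ k) v = x" using assms(1) unfolding anc_def by blast
    then show "\<exists>c. isChild V r par c x \<and> anc par c v"
      using ex_child_toward assms(2,3) by blast
  next
    fix c c' assume c: "isChild V r par c x \<and> anc par c v"
      and c': "isChild V r par c' x \<and> anc par c' v"
    have "\<not> anc par c x" using c not_anc_par[of c] unfolding isChild_def by simp
    moreover have "\<not> anc par c' x" using c' not_anc_par[of c'] unfolding isChild_def by simp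
    ultimately have "anc par c c' \<Longrightarrow> c = c'" "anc par c' c \<Longrightarrow> c' = c"
      using anc_par_iff[of c c'] anc_par_iff[of c' c] c c' unfolding isChild_def by auto
    then show "c = c'" using anc_linear[of c v c'] c c' by blast
  qed
  from theI'[OF this]
  show "isChild V r par (childToward V r par x v) x" "anc par (childToward V r par x v) v"
    unfolding childToward_def by simp_all
qed

text \<open>The last hypothesis covers both descending cases of the algorithm: x is a descendant
of u (Case 1), or x is not an ancestor of u (Case 3 b).\<close>
lemma descend_move:
  assumes "v \<in> V" "anc par x v" "x \<noteq> v" "anc par x u \<Longrightarrow> x = u"
  shows "path_move V r par u v x (childToward V r par x v)"
proof -
  define y where "y = childToward V r par x v"
  have y: "y \<in> V" "y \<noteq> r" "par y = x" "anc par y v"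
    using child_toward[OF assms(2,3,1)] unfolding y_def isChild_def by auto
  then have "tadj V r par x y"
    unfolding tadj_def using par_in_V by auto
  have xy: "anc par x y" using anc_par[of y] y(3) by simp
  have y_not_anc_u: "\<not> anc par y u"
  proof
    assume "anc par y u"
    then have "anc par y x" using anc_trans[OF xy] assms(4) by auto
    moreover have "x \<in> V" using y(1,3) par_in_V by auto
    ultimately have "par y = y" using anc_antisym[OF _ xy] y(3) by simp
    then show False using par_fixed_iff y(1,2) by blast
  qed
  have common_anc: "anc par c x" if "anc par c u" "anc par c v" for c
  proof (cases "anc par x u")
    case False
    then show ?thesis using anc_linear[OF that(2) assms(2)] anc_trans[OF _ that(1)] by blast
  qed (use that assms(4) in simp)
  have "on_path par u x y"
  proof (rule on_pathI)
    fix c assume "anc par c u" "anc par c y"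
    then show "anc par c x" using anc_par_iff[of c y] y(3) y_not_anc_u by auto
  qed (use xy in simp)
  moreover have "on_path par u y v"
    by (rule on_pathI) (use y(4) common_anc anc_trans[OF _ xy] in auto)
  ultimately show ?thesis
    unfolding path_move_def y_def[symmetric] using \<open>tadj V r par x y\<close> y_not_anc_u by auto
qed

text \<open>Covers both ascending cases of the algorithm (Cases 2 and 3 a).\<close>
lemma ascend_move:
  assumes "v \<in> V" "y \<in> V" "anc par y u" "\<not> anc par y v"
  shows "path_move V r par u v y (par y)"
proof -
  have "y \<noteq> r" using assms(1,4) anc_root by blast
  then have "tadj V r par y (par y)"
    unfolding tadj_def using assms(2) par_in_V by blast
  moreover have "par y \<noteq> u" using not_anc_par[OF assms(2) \<open>y \<noteq> r\<close>] assms(3) by auto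
  moreover have "on_path par u y (par y)"
    by (rule on_pathI) (use assms(3) anc_trans[OF _ anc_par] in auto)
  moreover have "on_path par u (par y) v"
  proof (rule on_pathI)
    fix c assume c: "anc par c u" "anc par c v"
    then have "anc par c y" using anc_linear[OF c(1) assms(3)] anc_trans[OF _ c(2)] assms(4) by blast
    then show "anc par c (par y)" using anc_par_iff[of c y] c(2) assms(4) by auto
  qed (use anc_trans[OF anc_par assms(3)] in simp)
  ultimately show ?thesis unfolding path_move_def by blast
qed

end

section \<open>Canonical subtrees\<close>

definition edge_in :: "'a set \<Rightarrow> 'a \<Rightarrow> ('a \<Rightarrow> 'a) \<Rightarrow> 'a set \<Rightarrow> 'a \<Rightarrow> 'a \<Rightarrow> bool" where
  "edge_in V r par A a b \<longleftrightarrow> a \<in> A \<and> b \<in> A \<and> tadj V r par a b"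

definition tree_connected :: "'a set \<Rightarrow> 'a \<Rightarrow> ('a \<Rightarrow> 'a) \<Rightarrow> 'a set \<Rightarrow> bool" where
  "tree_connected V r par Y \<longleftrightarrow> (\<forall>a\<in>Y. \<forall>b\<in>Y. conn_in V r par Y a b)"

lemma conn_in_iff:
  "conn_in V r par A x y \<longleftrightarrow> x \<in> A \<and> y \<in> A \<and> (edge_in V r par A)\<^sup>*\<^sup>* x y"
  unfolding conn_in_def edge_in_def[abs_def] ..

lemma conn_in_sym: "conn_in V r par A x y \<Longrightarrow> conn_in V r par A y x"
proof -
  have "symp (edge_in V r par A)"
    unfolding edge_in_def tadj_def by (rule sympI) blast
  then show "conn_in V r par A x y \<Longrightarrow> conn_in V r par A y x"
    unfolding conn_in_iff by (blast intro: sympD[OF symp_rtranclp])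
qed

lemma conn_in_trans: "conn_in V r par A x y \<Longrightarrow> conn_in V r par A y z \<Longrightarrow> conn_in V r par A x z"
  unfolding conn_in_iff by (blast intro: rtranclp_trans)

lemma conn_in_mono: "conn_in V r par A x y \<Longrightarrow> A \<subseteq> B \<Longrightarrow> conn_in V r par B x y"
proof -
  assume "A \<subseteq> B"
  then have "edge_in V r par A \<le> edge_in V r par B" unfolding edge_in_def by auto
  then show "conn_in V r par A x y \<Longrightarrow> conn_in V r par B x y"
    using \<open>A \<subseteq> B\<close> unfolding conn_in_iff by (blast dest: rtranclp_mono)
qed

lemma component_subset: "X \<in> components V r par A \<Longrightarrow> X \<subseteq> A \<and> X \<noteq> {}"
  unfolding components_def conn_in_iff by auto

lemma component_connected:
  assumes "X \<in> components V r par A" shows "tree_connected V r par X"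
proof -
  obtain x where x: "x \<in> A" "X = {y. conn_in V r par A x y}"
    using assms unfolding components_def by blast
  have "(edge_in V r par X)\<^sup>*\<^sup>* x y" if "(edge_in V r par A)\<^sup>*\<^sup>* x y" for y
    using that
  proof (induction rule: rtranclp_induct)
    case (step y z)
    then have "y \<in> X" "z \<in> X"
      using x unfolding conn_in_iff edge_in_def by (auto intro: rtranclp.rtrancl_into_rtrancl)
    then have "edge_in V r par X y z" using step.hyps(2) unfolding edge_in_def by blast
    then show ?case using step.IH by simp
  qed simp
  then have "conn_in V r par X x y" if "y \<in> X" for y
    using that x unfolding conn_in_iff by auto
  then show ?thesis
    unfolding tree_connected_def by (blast intro: conn_in_trans conn_in_sym)
qed

lemma connected_subset_component:
  assumes "X \<in> components V r par A" "Y \<subseteq> A" "tree_connected V r par Y" "y \<in> X" "y \<in> Y"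
  shows "Y \<subseteq> X"
proof
  fix z assume "z \<in> Y"
  obtain x where x: "X = {y. conn_in V r par A x y}"
    using assms(1) unfolding components_def by blast
  have "conn_in V r par A y z"
    using assms(3,5) \<open>z \<in> Y\<close> conn_in_mono[OF _ assms(2)] unfolding tree_connected_def by blast
  moreover have "conn_in V r par A x y" using assms(4) x by simp
  ultimately show "z \<in> X" unfolding x using conn_in_trans by fastforce
qed

context rtree
begin

lemma tree_connected_V: "tree_connected V r par V"
proof -
  have "conn_in V r par V a ((par ^^ j) a)" if "a \<in> V" for a j
  proof (induction j)
    case (Suc j)
    define z where "z = (par ^^ j) a"
    have "z \<in> V" using anc_in_V[of z a] that unfolding z_def anc_def by blast
    then have "conn_in V r par V z (par z)"
      unfolding conn_in_iff edge_in_def tadj_def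
      using par_in_V par_fixed_iff[of z] by (cases "z = r") auto
    then show ?case using Suc.IH conn_in_trans unfolding z_def by simp
  qed (use that in \<open>simp add: conn_in_iff\<close>)
  then have "conn_in V r par V a r" if "a \<in> V" for a
    using anc_root[OF that] that unfolding anc_def by blast
  then show ?thesis
    unfolding tree_connected_def by (blast intro: conn_in_trans conn_in_sym)
qed

lemma tree_connected_has_top:
  assumes "tree_connected V r par S" "S \<subseteq> V" "S \<noteq> {}"
  shows "\<exists>t\<in>S. \<forall>y\<in>S. anc par t y"
proof -
  have "finite S" using assms(2) finite_V finite_subset by blast
  then obtain t where t: "t \<in> S" "depth r par t = Min (depth r par ` S)"
    using Min_in[of "depth r par ` S"] assms(3) by fastforce
  have "anc par t z" if "(edge_in V r par S)\<^sup>*\<^sup>* t z" for z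
    using that
  proof (induction rule: rtranclp_induct)
    case (step y z)
    then have y_z: "y \<in> S" "z \<in> S" "(y \<noteq> r \<and> par y = z) \<or> (z \<noteq> r \<and> par z = y)"
      unfolding edge_in_def tadj_def by auto
    have "t \<noteq> y \<or> par y \<noteq> z" if "y \<noteq> r"
    proof (rule ccontr)
      assume "\<not> (t \<noteq> y \<or> par y \<noteq> z)"
      then have "depth r par (par t) < depth r par t"
        using depth_less[OF anc_par] par_fixed_iff y_z(1) assms(2) that by auto
      moreover have "depth r par t \<le> depth r par (par t)"
        unfolding t(2) using \<open>finite S\<close> \<open>\<not> (t \<noteq> y \<or> par y \<noteq> z)\<close> y_z(2) by simp
      ultimately show False by simp
    qed
    then show ?case
      using y_z(3) step.IH anc_par_iff[of t y] anc_trans[OF step.IH, of z] anc_par[of z] by auto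
  qed simp
  then show ?thesis
    using t(1) assms(1) unfolding tree_connected_def conn_in_iff by blast
qed

lemma rt_eqI:
  assumes "S \<subseteq> V" "t \<in> S" "\<forall>y\<in>S. anc par t y"
  shows "rt r par S = t"
  unfolding rt_def
proof (rule the_equality)
  fix x assume x: "x \<in> S \<and> (\<forall>y\<in>S. y \<noteq> x \<longrightarrow> depth r par x < depth r par y)"
  show "x = t"
  proof (rule ccontr)
    assume "x \<noteq> t"
    then have "depth r par x < depth r par t" "depth r par t < depth r par x"
      using x assms depth_less[of t x] by auto
    then show False by simp
  qed
qed (use assms depth_less in blast)

lemma rt_sub: "S \<subseteq> V \<Longrightarrow> w \<in> S \<Longrightarrow> rt r par (sub par S w) = w"
  by (rule rt_eqI) (auto simp: sub_def)

lemma canonical_connected: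
  "canonical V r par c1 k S \<Longrightarrow> S \<subseteq> V \<and> S \<noteq> {} \<and> tree_connected V r par S"
proof (induction rule: canonical.induct)
  case (canon_comp S X)
  then show ?case
    using component_subset[OF canon_comp.hyps(2)] component_connected[OF canon_comp.hyps(2)] by auto
qed (use root_in_V tree_connected_V in blast)

lemma canonical_rt:
  assumes "canonical V r par c1 k S" shows "rt r par S \<in> S"
  using canonical_connected[OF assms] tree_connected_has_top rt_eqI by metis

lemma lstep_in: "x \<in> S \<Longrightarrow> lstep V r par c1 S x \<in> S"
  unfolding lstep_def by simp

lemma lend_in:
  assumes "S \<subseteq> V" "x \<in> S"
  shows "lend V r par c1 S x \<in> S"
proof -
  let ?f = "lstep V r par c1 S"
  have "depth r par z < depth r par (?f z)" if "z \<in> S" "?f z \<noteq> z" for z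
  proof -
    have "isChild V r par (?f z) z"
      using that(2) unfolding lstep_def by (auto split: if_splits)
    then show ?thesis
      using depth_less[OF anc_par, of "?f z"] that(2) unfolding isChild_def by auto
  qed
  then obtain j where j: "?f ((?f ^^ j) x) = (?f ^^ j) x"
    using funpow_reaches_fixpoint[of S x ?f "depth r par"] lstep_in assms finite_subset finite_V
    by blast
  have "lend V r par c1 S x = (?f ^^ j) x"
    unfolding lend_def by (rule the_equality) (use j funpow_orbit_fixpoint_unique in auto)
  then show ?thesis using funpow_closed[of S ?f] lstep_in assms(2) by simp
qed

lemma CV_subset: "CV V r par c1 d S x \<Longrightarrow> S \<subseteq> V \<Longrightarrow> rt r par S \<in> S \<Longrightarrow> x \<in> S"
proof (induction rule: CV.induct)
  case (CV_here S b)
  then obtain j where "b = (lstep V r par c1 S ^^ j) (rt r par S)"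
    unfolding bd_def by (auto split: if_splits)
  then show ?case using funpow_closed[of S] lstep_in CV_here.prems(2) by simp
next
  case (CV_rec S b w x)
  then have "sub par S w \<subseteq> V" "rt r par (sub par S w) \<in> sub par S w"
    using rt_sub unfolding sub_def by auto
  then show ?case using CV_rec.IH unfolding sub_def by simp
qed

lemma Cset_subset: "canonical V r par c1 k S \<Longrightarrow> Cset V r par c1 k S \<subseteq> S"
  using CV_subset lend_in canonical_rt canonical_connected unfolding Cset_def by auto

lemma rt_in_Cset: "canonical V r par c1 k S \<Longrightarrow> rt r par S \<in> Cset V r par c1 k S"
  using canonical_rt unfolding Cset_def by auto

lemma canonical_eq_V_or_below:
  "canonical V r par c1 k B \<Longrightarrow> B = V \<or> B \<subseteq> V - Cset V r par c1 k V"
proof (induction rule: canonical.induct)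
  case (canon_comp S X)
  then show ?case using component_subset[OF canon_comp.hyps(2)] by blast
qed simp

lemma canonical_laminar:
  assumes "canonical V r par c1 k A" "canonical V r par c1 k B"
  shows "A \<inter> B = {} \<or> A = B \<or> A \<subseteq> B - Cset V r par c1 k B \<or> B \<subseteq> A - Cset V r par c1 k A"
  using assms
proof (induction arbitrary: B rule: canonical.induct)
  case canon_T
  then show ?case using canonical_eq_V_or_below by blast
next
  case (canon_comp S A)
  note A_comp = canon_comp.hyps(2) and IH_S = canon_comp.IH
  have A: "canonical V r par c1 k A" "A \<subseteq> S - Cset V r par c1 k S" "tree_connected V r par A"
    using canonical.canon_comp[OF canon_comp.hyps] component_subset[OF A_comp]
      component_connected[OF A_comp] by auto
  from canon_comp.prems show ?case
  proof (induction rule: canonical.induct)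
    case canon_T
    then show ?case using canonical_eq_V_or_below[OF A(1)] by blast
  next
    case (canon_comp S' B)
    note B_comp = canon_comp.hyps(2) and IH_S' = canon_comp.IH
    have B: "canonical V r par c1 k B" "B \<subseteq> S' - Cset V r par c1 k S'" "tree_connected V r par B"
      using canonical.canon_comp[OF canon_comp.hyps] component_subset[OF B_comp]
        component_connected[OF B_comp] by auto
    show ?case
    proof (cases "A \<inter> B = {}")
      case False
      then obtain y where y: "y \<in> A" "y \<in> B" by blast
      have "A \<subseteq> S' - Cset V r par c1 k S' \<Longrightarrow> A \<subseteq> B"
        using connected_subset_component[OF B_comp _ A(3) y(2,1)] by blast
      moreover have "B \<subseteq> S - Cset V r par c1 k S \<Longrightarrow> B \<subseteq> A"
        using connected_subset_component[OF A_comp _ B(3) y] by blast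
      ultimately show ?thesis
        using IH_S' IH_S[OF B(1)] A(2) B(2) y by blast
    qed simp
  qed
qed

lemma canonical_Cset_unique:
  assumes "canonical V r par c1 k A" "canonical V r par c1 k B"
    and "u \<in> Cset V r par c1 k A" "u \<in> Cset V r par c1 k B"
  shows "A = B"
  using canonical_laminar[OF assms(1,2)] Cset_subset[OF assms(1)] Cset_subset[OF assms(2)] assms(3,4)
  by blast

lemma ex_canonical_Cset:
  "canonical V r par c1 k S \<Longrightarrow> u \<in> S \<Longrightarrow> \<exists>S'. canonical V r par c1 k S' \<and> u \<in> Cset V r par c1 k S'"
proof (induction "card S" arbitrary: S rule: less_induct)
  case less
  show ?case
  proof (cases "u \<in> Cset V r par c1 k S")
    case False
    define X where "X = {y. conn_in V r par (S - Cset V r par c1 k S) u y}"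
    have X_comp: "X \<in> components V r par (S - Cset V r par c1 k S)"
      unfolding components_def X_def using False less.prems(2) by blast
    have "u \<in> X" unfolding X_def conn_in_iff using False less.prems(2) by simp
    have "X \<subseteq> S - Cset V r par c1 k S" using component_subset[OF X_comp] by simp
    then have "X \<subset> S"
      using rt_in_Cset[OF less.prems(1)] canonical_rt[OF less.prems(1)] by blast
    moreover have "finite S"
      using canonical_connected[OF less.prems(1)] finite_subset finite_V by blast
    ultimately have "card X < card S" by (simp add: psubset_card_mono)
    then show ?thesis
      using less.hyps canonical.canon_comp[OF less.prems(1) X_comp] \<open>u \<in> X\<close> by blast
  qed (use less.prems in blast)
qed

lemma Tsup_spec:
  assumes "u \<in> V"
  shows "canonical V r par c1 k (Tsup V r par c1 k u)" "u \<in> Cset V r par c1 k (Tsup V r par c1 k u)"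
proof -
  have "\<exists>!S. canonical V r par c1 k S \<and> u \<in> Cset V r par c1 k S"
    using ex_canonical_Cset[OF canonical.canon_T assms] canonical_Cset_unique by blast
  from theI'[OF this]
  show "canonical V r par c1 k (Tsup V r par c1 k u)" "u \<in> Cset V r par c1 k (Tsup V r par c1 k u)"
    unfolding Tsup_def by simp_all
qed

end

section \<open>Routing\<close>

lemma walk_weight_Cons_Cons [simp]:
  "walk_weight par w (a # b # xs) = delta par w a b + walk_weight par w (b # xs)"
  unfolding walk_weight_def by simp

lemma walk_weight_singleton [simp]: "walk_weight par w [a] = 0"
  unfolding walk_weight_def by simp

lemma walk_eq_Cons: "\<exists>xs. walk V r par c1 k n u v = u # xs"
  by (cases n) auto

context rtree
begin

lemma tadj_imp_adjG:
  assumes "tadj V r par a b" shows "adjG V r par c1 k a b"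
proof -
  have "a \<in> V" "b \<in> V" using assms unfolding tadj_def by auto
  then show ?thesis unfolding adjG_def using assms tadj_neq[OF assms] by blast
qed

lemma Cset_Tsup_clique:
  assumes "u \<in> V"
  shows "u \<in> Cset V r par c1 k (Tsup V r par c1 k u)" "Cset V r par c1 k (Tsup V r par c1 k u) \<subseteq> V"
    and "\<And>a b. a \<in> Cset V r par c1 k (Tsup V r par c1 k u) \<Longrightarrow> b \<in> Cset V r par c1 k (Tsup V r par c1 k u)
      \<Longrightarrow> a \<noteq> b \<Longrightarrow> adjG V r par c1 k a b"
proof -
  note T = Tsup_spec[OF assms(1), of c1 k]
  show "u \<in> Cset V r par c1 k (Tsup V r par c1 k u)" by (fact T(2))
  show C_V: "Cset V r par c1 k (Tsup V r par c1 k u) \<subseteq> V"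
    using Cset_subset[OF T(1)] canonical_connected[OF T(1)] by blast
  show "\<And>a b. a \<in> Cset V r par c1 k (Tsup V r par c1 k u) \<Longrightarrow> b \<in> Cset V r par c1 k (Tsup V r par c1 k u)
      \<Longrightarrow> a \<noteq> b \<Longrightarrow> adjG V r par c1 k a b"
    using T(1) C_V unfolding adjG_def by blast
qed

lemma case1_move:
  assumes "finite C" "u \<in> C" "v \<notin> C" "u \<in> V" "v \<in> V" "anc par u v"
  defines "x \<equiv> deepest r par {x \<in> C. anc par x v}"
  shows "x \<in> C" "path_move V r par u v x (childToward V r par x v)"
proof -
  have "u \<in> {x \<in> C. anc par x v}" using assms(2,6) by simp
  then have "x \<in> {x \<in> C. anc par x v}" "depth r par u \<le> depth r par x"
    using deepest_mem[of "{x \<in> C. anc par x v}", OF _ _ _ assms(5)] assms(1)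
    unfolding x_def by auto
  then have x: "x \<in> C" "anc par x v" "x \<noteq> v" "anc par x u \<Longrightarrow> x = u"
    using assms(3) depth_less[OF _ assms(4)] by fastforce+
  then show "x \<in> C" "path_move V r par u v x (childToward V r par x v)"
    using descend_move[OF assms(5) x(2-4)] by blast+
qed

lemma case2_move:
  assumes "finite C" "C \<subseteq> V" "u \<in> C" "v \<notin> C" "u \<in> V" "v \<in> V" "anc par v u"
  defines "x \<equiv> highest r par {x \<in> C. anc par v x \<and> anc par x u}"
  shows "x \<in> C" "path_move V r par u v x (par x)"
proof -
  have "x \<in> {x \<in> C. anc par v x \<and> anc par x u}"
    unfolding x_def by (rule highest_mem[OF _ _ _ assms(5)]) (use assms(1,3,7) in auto)
  then have x: "x \<in> C" "x \<in> V" "anc par x u" "anc par v x"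
    using assms(2) by blast+
  moreover have "\<not> anc par x v"
    using anc_antisym[OF _ x(4) assms(6)] x(1) assms(4) by blast
  ultimately show "x \<in> C" "path_move V r par u v x (par x)"
    using ascend_move[OF assms(6)] by blast+
qed

lemma case3a_move:
  assumes "finite C" "C \<subseteq> V" "u \<in> C" "u \<in> V" "v \<in> V" "\<not> anc par u v"
  defines "y \<equiv> highest r par {y \<in> C. anc par y u \<and> \<not> anc par y v}"
  shows "y \<in> C" "path_move V r par u v y (par y)"
proof -
  let ?Y = "{y \<in> C. anc par y u \<and> \<not> anc par y v}"
  have "u \<in> ?Y" using assms(3,6) by simp
  then have "?Y \<noteq> {}" by blast
  have "y \<in> ?Y"
    unfolding y_def by (rule highest_mem[OF _ \<open>?Y \<noteq> {}\<close> _ assms(4)]) (use assms(1) in auto)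
  then show "y \<in> C" "path_move V r par u v y (par y)"
    using ascend_move[OF assms(5)] assms(2) by blast+
qed

lemma case3b_move:
  assumes "finite C" "v \<notin> C" "v \<in> V" "{x \<in> C. anc par x v \<and> \<not> anc par x u} \<noteq> {}"
  defines "x \<equiv> deepest r par {x \<in> C. anc par x v \<and> \<not> anc par x u}"
  shows "x \<in> C" "path_move V r par u v x (childToward V r par x v)"
proof -
  have "x \<in> {x \<in> C. anc par x v \<and> \<not> anc par x u}"
    unfolding x_def by (rule deepest_mem(1)[OF _ assms(4) _ assms(3)]) (use assms(1) in auto)
  then have x: "x \<in> C" "anc par x v" "x \<noteq> v" "anc par x u \<Longrightarrow> x = u"
    using assms(2) by auto
  then show "x \<in> C" "path_move V r par u v x (childToward V r par x v)"
    using descend_move[OF assms(3) x(2-4)] by blast+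
qed

lemma rstep_on_path:
  assumes "u \<in> V" "v \<in> V" "u \<noteq> v" "\<not> adjG V r par c1 k u v"
  obtains x y where "rstep V r par c1 k u v = [x, y]" "u = x \<or> adjG V r par c1 k u x"
    "path_move V r par u v x y"
proof -
  define C where "C = Cset V r par c1 k (Tsup V r par c1 k u)"
  have clique: "u \<in> C" "C \<subseteq> V" "\<And>a b. a \<in> C \<Longrightarrow> b \<in> C \<Longrightarrow> a \<noteq> b \<Longrightarrow> adjG V r par c1 k a b"
    unfolding C_def using Cset_Tsup_clique[OF assms(1)] by blast+
  have "finite C" using clique(2) finite_V finite_subset by blast
  have "v \<notin> C" using clique(1) clique(3)[of u v] assms(3,4) by blast
  note cases = case1_move[OF \<open>finite C\<close> clique(1) \<open>v \<notin> C\<close> assms(1,2)]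
    case2_move[OF \<open>finite C\<close> clique(2,1) \<open>v \<notin> C\<close> assms(1,2)]
    case3a_move[OF \<open>finite C\<close> clique(2,1) assms(1,2)]
    case3b_move[OF \<open>finite C\<close> \<open>v \<notin> C\<close> assms(2)]
  have "\<exists>x\<in>C. \<exists>y. rstep V r par c1 k u v = [x, y] \<and> path_move V r par u v x y"
    unfolding rstep_def Let_def C_def[symmetric] using assms(4) cases by auto
  then obtain x y where "x \<in> C" "rstep V r par c1 k u v = [x, y]" "path_move V r par u v x y"
    by blast
  moreover have "u = x \<or> adjG V r par c1 k u x" using clique(1,3) \<open>x \<in> C\<close> by blast
  ultimately show ?thesis using that by blast
qed

lemma routing_walk_exact:
  assumes "u \<in> V" "v \<in> V"
  shows "\<exists>n. last (walk V r par c1 k n u v) = v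
           \<and> successively (\<lambda>a b. a = b \<or> adjG V r par c1 k a b) (walk V r par c1 k n u v)
           \<and> walk_weight par w (walk V r par c1 k n u v) = delta par w u v"
  using assms(1)
proof (induction "card (path_edges par u v)" arbitrary: u rule: less_induct)
  case less
  consider "u = v" | "u \<noteq> v" "adjG V r par c1 k u v" | "u \<noteq> v" "\<not> adjG V r par c1 k u v"
    by blast
  then show ?case
  proof cases
    case 1
    then show ?thesis by (intro exI[of _ 0]) (simp add: delta_def)
  next
    case 2
    then have "walk V r par c1 k 1 u v = [u, v]" by (simp add: rstep_def)
    then show ?thesis using 2 by (intro exI[of _ 1]) simp
  next
    case 3
    obtain x y where step: "rstep V r par c1 k u v = [x, y]" "u = x \<or> adjG V r par c1 k u x"
      "tadj V r par x y" "on_path par u x y" "on_path par u y v" "y \<noteq> u"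
      using rstep_on_path[OF less.prems assms(2) 3] unfolding path_move_def by blast
    have "x \<in> V" "y \<in> V" using step(3) unfolding tadj_def by auto
    then have "card (path_edges par y v) < card (path_edges par u v)"
      using card_path_edges_less[OF step(5) less.prems _ assms(2)] step(6) by blast
    then obtain n where n: "last (walk V r par c1 k n y v) = v"
      "successively (\<lambda>a b. a = b \<or> adjG V r par c1 k a b) (walk V r par c1 k n y v)"
      "walk_weight par w (walk V r par c1 k n y v) = delta par w y v"
      using less.hyps \<open>y \<in> V\<close> by blast
    obtain ys where ys: "walk V r par c1 k n y v = y # ys" using walk_eq_Cons[of V r par c1 k n y v] by blast
    have "walk V r par c1 k (Suc n) u v = u # x # y # ys" using step(1) 3(1) ys by simp
    moreover have "delta par w u x + delta par w x y + delta par w y v = delta par w u v"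
      using delta_on_path[OF step(4) less.prems \<open>x \<in> V\<close> \<open>y \<in> V\<close>]
        delta_on_path[OF step(5) less.prems \<open>y \<in> V\<close> assms(2)] by simp
    ultimately show ?thesis
      using n ys step(2) tadj_imp_adjG[OF step(3)] by (intro exI[of _ "Suc n"]) auto
  qed
qed

end

theorem theorem2:
  fixes V :: "'a set" and r :: 'a and par :: "'a \<Rightarrow> 'a" and c1 :: "'a \<Rightarrow> 'a"
    and w :: "'a \<Rightarrow> real" and k :: nat and u v :: 'a
  assumes tree: "rooted_tree V r par"
    and pos: "\<forall>x \<in> V - {r}. w x > 0"
    and heavy: "\<forall>x \<in> V. (\<exists>c. isChild V r par c x) \<longrightarrow>
                   isChild V r par (c1 x) x \<and>
                   (\<forall>c. isChild V r par c x \<longrightarrow> card (sub par V c) \<le> card (sub par V (c1 x)))"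
    and k4: "k \<ge> 4"
    and uV: "u \<in> V" and vV: "v \<in> V"
  shows "\<exists>n. last (walk V r par c1 k n u v) = v
           \<and> (\<forall>i. Suc i < length (walk V r par c1 k n u v) \<longrightarrow>
                 walk V r par c1 k n u v ! i = walk V r par c1 k n u v ! Suc i
                 \<or> adjG V r par c1 k (walk V r par c1 k n u v ! i) (walk V r par c1 k n u v ! Suc i))
           \<and> walk_weight par w (walk V r par c1 k n u v) = delta par w u v"
  using rtree.routing_walk_exact[OF rtree.intro[OF tree] uV vV]
  unfolding successively_conv_nth .

end
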